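(* The VC-density of the edge relation on the class $\mathcal H$ of all Hamming graphs is $2$.
   Context: For $d,q\in\mathbb N$ and a set $S$ with $|S|=q$, the Hamming graph $H(d,q)$ has vertex set $S^d$, two vertices adjacent iff they agree in all but exactly one coordinate; $\mathcal H=\{H(d,q)\mid d,q\in\mathbb N\}$. For a graph $G$, the edge relation set system is $(V(G),\mathcal S_G)$ with $\mathcal S_G=\{N(v)\mid v\in V(G)\}$ ($N(v)$ the set of neighbours of $v$). Its shatter function is $\pi_G(n)=\max\{|\{S\cap A\mid S\in\mathcal S_G\}| : A\subseteq V(G), |A|=n\}$. For a class $\mathcal C$ of graphs, $\pi_{\mathcal C}(n)=\max\{\pi_G(n)\mid G\in\mathcal C\}$, the VC-dimension of the edge relation on $\mathcal C$ is the supremum over $G\in\mathcal C$ of the largest size of a set $A$ with $\{A\cap S\mid S\in\mathcal S_G\}=\mathcal P(A)$, and the VC-density of the edge relation on $\mathcal C$ is $\inf\{r\in\mathbb R^+ : \pi_{\mathcal C}(n)\in\mathcal O(n^r)\}$ if that VC-dimension is finite, and $\infty$ otherwise. *)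

theory Defs
  imports Complex_Main "HOL-Library.Landau_Symbols" "HOL-Library.Extended_Real"
begin

definition hamming_vertices :: "nat \<Rightarrow> nat \<Rightarrow> nat list set" where
  "hamming_vertices d q = {xs. length xs = d \<and> set xs \<subseteq> {0..<q}}"

definition hamming_adj :: "nat list \<Rightarrow> nat list \<Rightarrow> bool" where
  "hamming_adj u v \<longleftrightarrow> length u = length v \<and> card {i. i < length u \<and> u ! i \<noteq> v ! i} = 1"

definition nbhd :: "'a set \<Rightarrow> ('a \<Rightarrow> 'a \<Rightarrow> bool) \<Rightarrow> 'a \<Rightarrow> 'a set" where
  "nbhd V adj v = {w \<in> V. adj v w}"

definition edge_set_system :: "'a set \<Rightarrow> ('a \<Rightarrow> 'a \<Rightarrow> bool) \<Rightarrow> 'a set set" where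
  "edge_set_system V adj = {nbhd V adj v | v. v \<in> V}"

definition traces :: "'a set \<Rightarrow> ('a \<Rightarrow> 'a \<Rightarrow> bool) \<Rightarrow> 'a set \<Rightarrow> 'a set set" where
  "traces V adj A = {S \<inter> A | S. S \<in> edge_set_system V adj}"

definition hamming_shatter :: "nat \<Rightarrow> nat" where
  "hamming_shatter n = Sup {card (traces (hamming_vertices d q) hamming_adj A) | d q A.
       A \<subseteq> hamming_vertices d q \<and> card A = n}"

definition hamming_vcdim_finite :: bool where
  "hamming_vcdim_finite \<longleftrightarrow> (\<exists>k::nat. \<forall>d q A. A \<subseteq> hamming_vertices d q \<and>
       traces (hamming_vertices d q) hamming_adj A = Pow A \<longrightarrow> card A \<le> k)"

definition hamming_vc_density :: ereal where
  "hamming_vc_density = (if hamming_vcdim_finite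
      then Inf (ereal ` {r::real. r > 0 \<and>
              (\<lambda>n. real (hamming_shatter n)) \<in> O(\<lambda>n. real n powr r)})
      else \<infinity>)"

end

theory Submission
  imports Defs
begin

(* A trace N(v) \<inter> A with two distinct points x, y falls into one of two kinds. If x and y are
   not adjacent, then v is one of the at most two common neighbours of x and y. Otherwise the
   trace is a clique, and all of it, together with v, lies on the line through x and y (the words
   that differ from x only in the coordinate where x and y differ); the trace is then A \<inter> L if
   v \<notin> A, and A \<inter> L - {v} if v \<in> A. Indexing these traces by pairs of points of A gives at most
   1 + n + 4 n^2 traces on an n-set, so the shatter function is O(n^2) and no set of more than
   8 points is shattered. Conversely, in H(2, m + 1) the 2m points (i, 0) and (0, j), 1 \<le> i, j \<le> m,
   have the m^2 distinct traces N((i, j)) \<inter> A = {(i, 0), (0, j)}, so no exponent below 2 works. *)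

lemma hamming_adj_iff:
  "hamming_adj u v \<longleftrightarrow> length u = length v \<and>
     (\<exists>p<length u. u!p \<noteq> v!p \<and> (\<forall>j<length u. j \<noteq> p \<longrightarrow> u!j = v!j))"
proof -
  have "{i. i < length u \<and> u!i \<noteq> v!i} = {p} \<longleftrightarrow>
        p < length u \<and> u!p \<noteq> v!p \<and> (\<forall>j<length u. j \<noteq> p \<longrightarrow> u!j = v!j)" for p
    by blast
  then show ?thesis
    unfolding hamming_adj_def One_nat_def card_1_singleton_iff by auto
qed

lemma hamming_adj_sym: "hamming_adj u v \<Longrightarrow> hamming_adj v u"
  unfolding hamming_adj_iff by metis

lemma hamming_adj_irrefl: "\<not> hamming_adj u u"
  unfolding hamming_adj_iff by auto

lemma hamming_adj_Nil [simp]: "\<not> hamming_adj [] v"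
  unfolding hamming_adj_iff by simp

lemma hamming_adj_Cons [simp]:
  "hamming_adj (a # u) (b # w) \<longleftrightarrow> (a \<noteq> b \<and> u = w) \<or> (a = b \<and> hamming_adj u w)"
proof -
  have "u = w \<longleftrightarrow> length u = length w \<and> (\<forall>j<length u. u!j = w!j)"
    using nth_equalityI by blast
  then show ?thesis
    unfolding hamming_adj_iff by (cases "a = b") (simp_all add: Ex_less_Suc2 All_less_Suc2)
qed

lemma common_neighbour_eq_list_update:
  assumes "hamming_adj v x" "hamming_adj v y" "x \<noteq> y" "\<not> hamming_adj x y"
  obtains p p' where "p < length x" "x!p \<noteq> y!p" "v = x[p := y!p]"
    "\<forall>j<length x. j \<noteq> p \<and> j \<noteq> p' \<longrightarrow> x!j = y!j"
proof -
  obtain p where p: "p < length v" "v!p \<noteq> x!p" "\<forall>j<length v. j \<noteq> p \<longrightarrow> v!j = x!j"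
    using assms(1) unfolding hamming_adj_iff by blast
  obtain p' where p': "v!p' \<noteq> y!p'" "\<forall>j<length v. j \<noteq> p' \<longrightarrow> v!j = y!j"
    using assms(2) unfolding hamming_adj_iff by blast
  have len: "length x = length v" "length y = length v"
    using assms(1,2) unfolding hamming_adj_iff by auto
  have agree: "\<forall>j<length x. j \<noteq> p \<and> j \<noteq> p' \<longrightarrow> x!j = y!j"
    using p(3) p'(2) len by auto
  have "p \<noteq> p'"
  proof
    assume "p = p'"
    have "x!p \<noteq> y!p"
      using agree \<open>p = p'\<close> len assms(3) by (metis nth_equalityI)
    then have "hamming_adj x y"
      unfolding hamming_adj_iff using agree \<open>p = p'\<close> len p(1) by auto
    with assms(4) show False ..
  qed
  then have "v!p = y!p"
    using p'(2) p(1) by blast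
  then have "v = x[p := y!p]"
    using p len by (intro nth_equalityI) (auto simp: nth_list_update)
  moreover have "x!p \<noteq> y!p"
    using \<open>v!p = y!p\<close> p(2) by simp
  moreover have "p < length x"
    using p(1) len by simp
  ultimately show thesis
    using that agree by blast
qed

lemma finite_card_common_neighbours:
  assumes "x \<noteq> y" "\<not> hamming_adj x y"
  shows "finite {v. hamming_adj v x \<and> hamming_adj v y}"
    and "card {v. hamming_adj v x \<and> hamming_adj v y} \<le> 2"
proof -
  let ?C = "{v. hamming_adj v x \<and> hamming_adj v y}"
  have "finite ?C \<and> card ?C \<le> 2"
  proof (cases "?C = {}")
    case True
    then show ?thesis by (simp only: True) simp
  next
    case False
    then obtain v0 where "hamming_adj v0 x" "hamming_adj v0 y" by blast
    then obtain p0 p1 where p01: "\<forall>j<length x. j \<noteq> p0 \<and> j \<noteq> p1 \<longrightarrow> x!j = y!j"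
      using common_neighbour_eq_list_update assms by metis
    let ?U = "(\<lambda>p. x[p := y!p]) ` {p0, p1}"
    have sub: "?C \<subseteq> ?U"
    proof
      fix v assume "v \<in> ?C"
      then obtain p where "p < length x" "x!p \<noteq> y!p" "v = x[p := y!p]"
        using common_neighbour_eq_list_update assms by blast
      with p01 show "v \<in> ?U" by blast
    qed
    have "card ?U \<le> 2"
      by (rule order_trans[OF card_image_le]) (auto simp: card_insert_if)
    with sub show ?thesis
      using card_mono[of ?U ?C] finite_subset[of ?C ?U] by simp
  qed
  then show "finite ?C" "card ?C \<le> 2" by auto
qed

definition hamming_line :: "nat list \<Rightarrow> nat list \<Rightarrow> nat list set" where
  "hamming_line x y = {w. length w = length x \<and> (\<forall>j<length x. x!j = y!j \<longrightarrow> w!j = x!j)}"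

lemma left_mem_hamming_line: "x \<in> hamming_line x y"
  unfolding hamming_line_def by simp

lemma right_mem_hamming_line: "length y = length x \<Longrightarrow> y \<in> hamming_line x y"
  unfolding hamming_line_def by simp

lemma common_neighbour_mem_hamming_line:
  assumes "hamming_adj x y" "hamming_adj w x" "hamming_adj w y"
  shows "w \<in> hamming_line x y"
proof -
  obtain i where i: "i < length x" "x!i \<noteq> y!i" "\<forall>j<length x. j \<noteq> i \<longrightarrow> x!j = y!j"
    using assms(1) unfolding hamming_adj_iff by blast
  obtain p where p: "p < length w" "w!p \<noteq> x!p" "\<forall>j<length w. j \<noteq> p \<longrightarrow> w!j = x!j"
    using assms(2) unfolding hamming_adj_iff by blast
  obtain p' where p': "w!p' \<noteq> y!p'" "\<forall>j<length w. j \<noteq> p' \<longrightarrow> w!j = y!j"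
    using assms(3) unfolding hamming_adj_iff by blast
  have len: "length w = length x"
    using assms(2) unfolding hamming_adj_iff by simp
  have "p = i"
  proof (rule ccontr)
    assume "p \<noteq> i"
    then have "w!i = x!i"
      using p(3) i(1) len by simp
    then have "p' = i"
      using p'(2) i(1,2) len by metis
    then show False
      using p p' i len \<open>p \<noteq> i\<close> by metis
  qed
  then show ?thesis
    unfolding hamming_line_def using p(3) i len by auto
qed

lemma hamming_adj_if_mem_hamming_line:
  assumes "hamming_adj x y" "w \<in> hamming_line x y" "w' \<in> hamming_line x y" "w \<noteq> w'"
  shows "hamming_adj w w'"
proof -
  obtain i where i: "i < length x" "\<forall>j<length x. j \<noteq> i \<longrightarrow> x!j = y!j"
    using assms(1) unfolding hamming_adj_iff by blast
  have len: "length w = length x" "length w' = length x"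
    using assms(2,3) unfolding hamming_line_def by auto
  have agree: "\<forall>j<length w. j \<noteq> i \<longrightarrow> w!j = w'!j"
    using assms(2,3) i len unfolding hamming_line_def by auto
  then have "w!i \<noteq> w'!i"
    using len assms(4) by (metis nth_equalityI)
  then show ?thesis
    unfolding hamming_adj_iff using len i(1) agree by auto
qed

lemma hamming_line_eq:
  assumes "hamming_adj x y" "v \<in> hamming_line x y" "v \<noteq> x"
  shows "hamming_line x v = hamming_line x y"
proof -
  obtain i where i: "i < length x" "x!i \<noteq> y!i" "\<forall>j<length x. j \<noteq> i \<longrightarrow> x!j = y!j"
    using assms(1) unfolding hamming_adj_iff by blast
  have len: "length v = length x" and v: "\<forall>j<length x. x!j = y!j \<longrightarrow> v!j = x!j"
    using assms(2) unfolding hamming_line_def by auto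
  have "x!i \<noteq> v!i"
    using v i len assms(3) by (metis nth_equalityI)
  then have "\<forall>j<length x. x!j = v!j \<longleftrightarrow> x!j = y!j"
    using i v by metis
  then show ?thesis
    unfolding hamming_line_def by auto
qed

lemma traces_eq_image_nbhd: "A \<subseteq> V \<Longrightarrow> traces V adj A = nbhd A adj ` V"
  unfolding traces_def edge_set_system_def nbhd_def by auto

lemma nbhd_clique_eq_hamming_line:
  assumes T: "T = nbhd A hamming_adj v" and "x \<in> T" "y \<in> T" "x \<noteq> y"
    and clique: "\<And>a b. a \<in> T \<Longrightarrow> b \<in> T \<Longrightarrow> a \<noteq> b \<Longrightarrow> hamming_adj a b"
  shows "v \<in> hamming_line x y" and "T = A \<inter> hamming_line x y - {v}"
proof -
  have xy: "hamming_adj x y"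
    using clique assms(2-4) by blast
  have "hamming_adj v x" "hamming_adj v y"
    using T assms(2,3) unfolding nbhd_def by auto
  then show v: "v \<in> hamming_line x y"
    using common_neighbour_mem_hamming_line[OF xy] hamming_adj_sym by blast
  have "w \<in> hamming_line x y" if "w \<in> T" for w
  proof (cases "w = x \<or> w = y")
    case True
    moreover have "length y = length x"
      using xy unfolding hamming_adj_iff by simp
    ultimately show ?thesis
      using left_mem_hamming_line right_mem_hamming_line by blast
  next
    case False
    then have "hamming_adj w x" "hamming_adj w y"
      using clique that assms(2,3) by auto
    then show ?thesis
      by (rule common_neighbour_mem_hamming_line[OF xy])
  qed
  moreover have "w \<in> T" if "w \<in> A" "w \<in> hamming_line x y" "w \<noteq> v" for w
    using hamming_adj_if_mem_hamming_line[OF xy v that(2)] that T unfolding nbhd_def by auto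
  ultimately show "T = A \<inter> hamming_line x y - {v}"
    using T hamming_adj_irrefl unfolding nbhd_def by blast
qed

definition nonadjacent_common_neighbours :: "nat list set \<Rightarrow> nat list set" where
  "nonadjacent_common_neighbours A =
     {v. \<exists>x\<in>A. \<exists>y\<in>A. x \<noteq> y \<and> \<not> hamming_adj x y \<and> hamming_adj v x \<and> hamming_adj v y}"

lemma finite_card_nonadjacent_common_neighbours:
  assumes "finite A"
  shows "finite (nonadjacent_common_neighbours A)"
    and "card (nonadjacent_common_neighbours A) \<le> 2 * card A ^ 2"
proof -
  define C where "C = (\<lambda>(x, y). {v. x \<noteq> y \<and> \<not> hamming_adj x y \<and> hamming_adj v x \<and> hamming_adj v y})"
  have C: "finite (C (x, y)) \<and> card (C (x, y)) \<le> 2" for x y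
  proof (cases "x \<noteq> y \<and> \<not> hamming_adj x y")
    case True
    then show ?thesis
      using finite_card_common_neighbours[of x y] unfolding C_def by simp
  next
    case False
    then have "C (x, y) = {}"
      unfolding C_def by auto
    then show ?thesis by simp
  qed
  have eq: "nonadjacent_common_neighbours A = (\<Union>p\<in>A \<times> A. C p)"
    unfolding nonadjacent_common_neighbours_def C_def by blast
  show "finite (nonadjacent_common_neighbours A)"
    unfolding eq using assms C by auto
  have "card (\<Union>p\<in>A \<times> A. C p) \<le> (\<Sum>p\<in>A \<times> A. card (C p))"
    using assms by (intro card_UN_le) simp
  also have "\<dots> \<le> (\<Sum>p\<in>A \<times> A. 2)"
    using C by (intro sum_mono) auto
  also have "\<dots> = 2 * card A ^ 2"
    by (simp add: card_cartesian_product power2_eq_square)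
  finally show "card (nonadjacent_common_neighbours A) \<le> 2 * card A ^ 2"
    unfolding eq .
qed

definition hamming_trace_candidates :: "nat list set \<Rightarrow> nat list set set" where
  "hamming_trace_candidates A =
     insert {} ((\<lambda>a. {a}) ` A)
     \<union> nbhd A hamming_adj ` nonadjacent_common_neighbours A
     \<union> (\<lambda>(x, y). A \<inter> hamming_line x y) ` (A \<times> A)
     \<union> (\<lambda>(x, y). A \<inter> hamming_line x y - {y}) ` (A \<times> A)"

lemma nbhd_mem_hamming_trace_candidates:
  "nbhd A hamming_adj v \<in> hamming_trace_candidates A"
proof -
  let ?T = "nbhd A hamming_adj v"
  have TA: "?T \<subseteq> A"
    unfolding nbhd_def by blast
  consider (small) "\<forall>x\<in>?T. \<forall>y\<in>?T. x = y"
    | (nonadjacent) x y where "x \<in> ?T" "y \<in> ?T" "x \<noteq> y" "\<not> hamming_adj x y"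
    | (clique) x y where "x \<in> ?T" "y \<in> ?T" "x \<noteq> y"
        "\<And>a b. a \<in> ?T \<Longrightarrow> b \<in> ?T \<Longrightarrow> a \<noteq> b \<Longrightarrow> hamming_adj a b"
    by blast
  then show ?thesis
  proof cases
    case small
    then have "?T = {} \<or> (\<exists>a\<in>A. ?T = {a})"
      using TA by blast
    then show ?thesis
      unfolding hamming_trace_candidates_def by blast
  next
    case nonadjacent
    then have "v \<in> nonadjacent_common_neighbours A"
      unfolding nonadjacent_common_neighbours_def nbhd_def using hamming_adj_sym by blast
    then show ?thesis
      unfolding hamming_trace_candidates_def by blast
  next
    case clique
    note line = nbhd_clique_eq_hamming_line[OF refl clique]
    have xy: "x \<in> A" "y \<in> A"
      using clique(1,2) TA by auto
    show ?thesis
    proof (cases "v \<in> A")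
      case False
      then have "?T = A \<inter> hamming_line x y"
        using line(2) by blast
      then show ?thesis
        unfolding hamming_trace_candidates_def using xy by blast
    next
      case True
      have "v \<noteq> x"
        using clique(1) hamming_adj_irrefl unfolding nbhd_def by blast
      then have "hamming_line x v = hamming_line x y"
        using hamming_line_eq clique(1-4) line(1) by blast
      then have "?T = A \<inter> hamming_line x v - {v}"
        using line(2) by simp
      then show ?thesis
        unfolding hamming_trace_candidates_def using xy(1) True by blast
    qed
  qed
qed

lemma card_hamming_trace_candidates_le:
  assumes "finite A"
  shows "card (hamming_trace_candidates A) \<le> 1 + card A + 4 * card A ^ 2"
proof -
  have singletons: "card (insert {} ((\<lambda>a. {a}) ` A)) \<le> 1 + card A"
    using assms card_image_le[OF assms, of "\<lambda>a. {a}"] by (simp add: card_insert_if)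
  have common: "card (nbhd A hamming_adj ` nonadjacent_common_neighbours A) \<le> 2 * card A ^ 2"
    using card_image_le finite_card_nonadjacent_common_neighbours[OF assms] le_trans by blast
  have pairs: "card (f ` (A \<times> A)) \<le> card A ^ 2" for f :: "nat list \<times> nat list \<Rightarrow> nat list set"
    using card_image_le[of "A \<times> A" f] assms by (simp add: card_cartesian_product power2_eq_square)
  have "card (insert {} ((\<lambda>a. {a}) ` A)) + card (nbhd A hamming_adj ` nonadjacent_common_neighbours A)
      + card ((\<lambda>(x, y). A \<inter> hamming_line x y) ` (A \<times> A))
      + card ((\<lambda>(x, y). A \<inter> hamming_line x y - {y}) ` (A \<times> A))
      \<le> 1 + card A + 4 * card A ^ 2"
    using singletons common pairs[of "\<lambda>(x, y). A \<inter> hamming_line x y"]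
      pairs[of "\<lambda>(x, y). A \<inter> hamming_line x y - {y}"] by linarith
  then show ?thesis
    unfolding hamming_trace_candidates_def
    by (rule order_trans[rotated]) (intro order_trans[OF card_Un_le] add_mono order_refl)
qed

lemma card_image_nbhd_hamming_le:
  assumes "finite A"
  shows "card (nbhd A hamming_adj ` V) \<le> 1 + card A + 4 * card A ^ 2"
proof -
  have "hamming_trace_candidates A \<subseteq> Pow A"
    unfolding hamming_trace_candidates_def nbhd_def by auto
  then have "finite (hamming_trace_candidates A)"
    using assms finite_subset by blast
  then have "card (nbhd A hamming_adj ` V) \<le> card (hamming_trace_candidates A)"
    using nbhd_mem_hamming_trace_candidates by (intro card_mono) auto
  with card_hamming_trace_candidates_le[OF assms] show ?thesis
    by linarith
qed

lemma finite_hamming_vertices: "finite (hamming_vertices d q)"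
proof -
  have "hamming_vertices d q = {xs. set xs \<subseteq> {0..<q} \<and> length xs = d}"
    unfolding hamming_vertices_def by auto
  then show ?thesis
    using finite_lists_length_eq[OF finite_atLeastLessThan] by simp
qed

lemma card_traces_hamming_le:
  assumes "A \<subseteq> hamming_vertices d q"
  shows "card (traces (hamming_vertices d q) hamming_adj A) \<le> 1 + card A + 4 * card A ^ 2"
  using card_image_nbhd_hamming_le finite_subset[OF assms finite_hamming_vertices]
  unfolding traces_eq_image_nbhd[OF assms] by blast

lemma bdd_above_hamming_trace_counts:
  "bdd_above {card (traces (hamming_vertices d q) hamming_adj A) | d q A.
     A \<subseteq> hamming_vertices d q \<and> card A = n}"
  using card_traces_hamming_le by (intro bdd_aboveI[of _ "1 + n + 4 * n ^ 2"]) blast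

lemma hamming_shatter_le: "hamming_shatter n \<le> 1 + n + 4 * n ^ 2"
proof -
  let ?X = "{card (traces (hamming_vertices d q) hamming_adj A) | d q A.
              A \<subseteq> hamming_vertices d q \<and> card A = n}"
  have "Sup ?X \<le> 1 + n + 4 * n ^ 2"
  proof (cases "?X = {}")
    case True
    then show ?thesis by (simp only: True Sup_nat_empty)
  next
    case False
    then show ?thesis
      by (rule cSup_least) (use card_traces_hamming_le in force)
  qed
  then show ?thesis
    unfolding hamming_shatter_def .
qed

lemma card_traces_le_hamming_shatter:
  assumes "A \<subseteq> hamming_vertices d q"
  shows "card (traces (hamming_vertices d q) hamming_adj A) \<le> hamming_shatter (card A)"
  unfolding hamming_shatter_def
  using assms by (intro cSup_upper[OF _ bdd_above_hamming_trace_counts]) blast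

lemma hamming_shatter_ge: "m ^ 2 \<le> hamming_shatter (2 * m)"
proof -
  define A where "A = (\<lambda>i. [i, 0]) ` {1..m} \<union> (\<lambda>j. [0, j]) ` {1..m}"
  define V where "V = hamming_vertices 2 (m + 1)"
  have AV: "A \<subseteq> V"
    unfolding A_def V_def hamming_vertices_def by auto
  have "card A = card ((\<lambda>i. [i, 0::nat]) ` {1..m}) + card ((\<lambda>j. [0::nat, j]) ` {1..m})"
    unfolding A_def by (rule card_Un_disjoint) auto
  also have "\<dots> = 2 * m"
    by (simp add: card_image inj_on_def)
  finally have card_A: "card A = 2 * m" .
  have sub: "(\<lambda>(i, j). {[i, 0], [0, j]}) ` ({1..m} \<times> {1..m}) \<subseteq> nbhd A hamming_adj ` V"
  proof clarify
    fix i j :: nat assume ij: "i \<in> {1..m}" "j \<in> {1..m}"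
    then have "nbhd A hamming_adj [i, j] = {[i, 0], [0, j]}"
      unfolding A_def nbhd_def by auto
    moreover have "[i, j] \<in> V"
      using ij unfolding V_def hamming_vertices_def by auto
    ultimately show "{[i, 0], [0, j]} \<in> nbhd A hamming_adj ` V"
      by (metis image_eqI)
  qed
  have inj: "inj_on (\<lambda>(i, j). {[i, 0::nat], [0, j]}) ({1..m} \<times> {1..m})"
    by (auto simp: inj_on_def doubleton_eq_iff)
  have fin: "finite (nbhd A hamming_adj ` V)"
    unfolding V_def using finite_hamming_vertices by blast
  have "m ^ 2 = card ((\<lambda>(i, j). {[i, 0::nat], [0, j]}) ` ({1..m} \<times> {1..m}))"
    using inj by (simp add: card_image card_cartesian_product power2_eq_square)
  also have "\<dots> \<le> card (nbhd A hamming_adj ` V)"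
    by (rule card_mono[OF fin sub])
  also have "\<dots> = card (traces V hamming_adj A)"
    by (simp add: traces_eq_image_nbhd[OF AV])
  also have "\<dots> \<le> hamming_shatter (card A)"
    using AV unfolding V_def by (rule card_traces_le_hamming_shatter)
  finally show ?thesis
    by (simp add: card_A)
qed

lemma quadratic_less_exp: "n \<ge> 9 \<Longrightarrow> 1 + n + 4 * n ^ 2 < (2::nat) ^ n"
proof (induction n rule: nat_induct_at_least)
  case base
  then show ?case by simp
next
  case (Suc n)
  have "9 * n \<le> n * n"
    using Suc.hyps by simp
  then have "8 * n + 5 \<le> 1 + n + 4 * n ^ 2"
    unfolding power2_eq_square using Suc.hyps by linarith
  moreover have "Suc n ^ 2 = n ^ 2 + 2 * n + 1"
    by (simp add: power2_eq_square)
  ultimately show ?case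
    using Suc.IH by simp
qed

lemma hamming_vcdim_finite: hamming_vcdim_finite
  unfolding hamming_vcdim_finite_def
proof (intro exI[of _ 8] allI impI)
  fix d q A
  assume shattered: "A \<subseteq> hamming_vertices d q \<and> traces (hamming_vertices d q) hamming_adj A = Pow A"
  have "finite A"
    using shattered finite_subset[OF _ finite_hamming_vertices] by auto
  moreover have "card (Pow A) \<le> 1 + card A + 4 * card A ^ 2"
    using card_traces_hamming_le[of A d q] shattered by metis
  ultimately have "2 ^ card A \<le> 1 + card A + 4 * card A ^ 2"
    by (simp add: card_Pow)
  then show "card A \<le> 8"
    using quadratic_less_exp[of "card A"] by linarith
qed

lemma hamming_shatter_bigo: "(\<lambda>n. real (hamming_shatter n)) \<in> O(\<lambda>n. real n powr 2)"
proof (rule bigoI[of _ 6])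
  show "\<forall>\<^sub>F n in sequentially. norm (real (hamming_shatter n)) \<le> 6 * norm (real n powr 2)"
    unfolding eventually_sequentially
  proof (intro exI[of _ 1] allI impI)
    fix n :: nat assume "1 \<le> n"
    moreover have "n \<le> n * n"
      by (rule le_square)
    ultimately have "1 + n + 4 * n ^ 2 \<le> 6 * n ^ 2"
      unfolding power2_eq_square by linarith
    then have "hamming_shatter n \<le> 6 * n ^ 2"
      using hamming_shatter_le order_trans by blast
    then have "real (hamming_shatter n) \<le> real (6 * n ^ 2)"
      by (rule of_nat_mono)
    then show "norm (real (hamming_shatter n)) \<le> 6 * norm (real n powr 2)"
      by simp
  qed
qed

lemma double_powr_2_bigo_hamming_shatter:
  "(\<lambda>m. real (2 * m) powr 2) \<in> O(\<lambda>m. real (hamming_shatter (2 * m)))"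
proof (rule bigoI[of _ 4], rule always_eventually, rule allI)
  fix m :: nat
  have "real (m ^ 2) \<le> real (hamming_shatter (2 * m))"
    using hamming_shatter_ge by (rule of_nat_mono)
  then show "norm (real (2 * m) powr 2) \<le> 4 * norm (real (hamming_shatter (2 * m)))"
    by (simp add: power2_eq_square)
qed

lemma powr_exponent_le_if_bigo:
  fixes f :: "nat \<Rightarrow> real"
  assumes f: "f \<in> O(\<lambda>n. real n powr r)"
    and "k > 0"
    and lower: "(\<lambda>m. real (k * m) powr s) \<in> O(\<lambda>m. f (k * m))"
  shows "s \<le> r"
proof -
  have lim: "filterlim (\<lambda>m. k * m) at_top sequentially"
    using \<open>k > 0\<close> by (rule mult_nat_left_at_top)
  have "(\<lambda>m. f (k * m)) \<in> O(\<lambda>m. real (k * m) powr r)"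
    using landau_o.big.compose[OF f lim] by simp
  with lower have "(\<lambda>m. real (k * m) powr s) \<in> O(\<lambda>m. real (k * m) powr r)"
    by (rule landau_o.big_trans)
  moreover have "filterlim (\<lambda>m. real (k * m)) at_top sequentially"
    using filterlim_compose[OF filterlim_real_sequentially lim] by simp
  ultimately show ?thesis
    using powr_bigo_iff[OF _ trivial_limit_sequentially] by blast
qed

theorem mainTheorem18:
  shows "hamming_vc_density = 2"
proof -
  let ?R = "{r::real. r > 0 \<and> (\<lambda>n. real (hamming_shatter n)) \<in> O(\<lambda>n. real n powr r)}"
  have "2 \<in> ?R"
    using hamming_shatter_bigo by simp
  moreover have "2 \<le> r" if "r \<in> ?R" for r
    using that double_powr_2_bigo_hamming_shatter
    by (intro powr_exponent_le_if_bigo[of _ r 2]) auto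
  ultimately have "Inf (ereal ` ?R) = 2"
    by (intro antisym Inf_lower Inf_greatest) auto
  then show ?thesis
    unfolding hamming_vc_density_def using hamming_vcdim_finite by simp
qed

end
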